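(* For every infinite word $u\in A^{\mathbb{N}}$, the worm $W(u)$ tiles the integer half-space by translations: $\mathbb{H}=W(u)\oplus\Lambda$, i.e. every $z\in\mathbb{H}$ is written uniquely as $w+t$ with $w\in W(u)$, $t\in\Lambda$.
   Context: $A=\{0,\dots,d\}$, $h(y)=\sum_iy_i$ on $\mathbb{R}^{d+1}$, $\mathbb{H}=\{z\in\mathbb{Z}^{d+1}:h(z)\ge0\}$, $\Lambda=\{z\in\mathbb{Z}^{d+1}:h(z)=0\}$. $W(u)=\{\mathrm{ab}(p):p\text{ finite prefix of }u\}$, where $\mathrm{ab}(p)\in\mathbb{Z}^{d+1}$ counts the occurrences of each letter in $p$. *)

theory Defs
  imports Main
begin

text \<open>Alphabet A = {0..d}. Vectors of Z^(d+1) are represented as functions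
  nat => int vanishing outside {0..d}. An infinite word over A is a
  function u :: nat => nat with u k <= d for all k.\<close>

definition lattice_vecs :: "nat \<Rightarrow> (nat \<Rightarrow> int) set" where
  "lattice_vecs d = {z. \<forall>i>d. z i = 0}"

definition hsum :: "nat \<Rightarrow> (nat \<Rightarrow> int) \<Rightarrow> int" where
  "hsum d z = (\<Sum>i\<le>d. z i)"

definition halfspace :: "nat \<Rightarrow> (nat \<Rightarrow> int) set" where
  "halfspace d = {z \<in> lattice_vecs d. hsum d z \<ge> 0}"

definition Lam :: "nat \<Rightarrow> (nat \<Rightarrow> int) set" where
  "Lam d = {z \<in> lattice_vecs d. hsum d z = 0}"

definition ab_prefix :: "nat \<Rightarrow> (nat \<Rightarrow> nat) \<Rightarrow> nat \<Rightarrow> (nat \<Rightarrow> int)" where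
  "ab_prefix d u n = (\<lambda>i. if i \<le> d then int (card {k. k < n \<and> u k = i}) else 0)"

definition worm :: "nat \<Rightarrow> (nat \<Rightarrow> nat) \<Rightarrow> (nat \<Rightarrow> int) set" where
  "worm d u = {ab_prefix d u n | n. True}"

end

theory Submission
  imports Defs
begin

text \<open>The height \<open>h\<close> of the Parikh vector of a prefix is its length, so the worm meets every
  level \<open>h = n\<close>, \<open>n \<ge> 0\<close>, of the half-space in exactly one point. Since each such level is a
  single coset of \<open>\<Lambda>\<close>, this is precisely the tiling property.\<close>

lemma hsum_add: "hsum d (\<lambda>i. a i + b i) = hsum d a + hsum d b"
  by (simp add: hsum_def sum.distrib)

lemma hsum_diff: "hsum d (\<lambda>i. a i - b i) = hsum d a - hsum d b"
  by (simp add: hsum_def sum_subtractf)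

lemma halfspace_tiling:
  assumes W: "W \<subseteq> lattice_vecs d" and bij: "bij_betw (hsum d) W {0..}"
  shows "\<forall>z \<in> halfspace d. \<exists>!p. fst p \<in> W \<and> snd p \<in> Lam d \<and> z = (\<lambda>i. fst p i + snd p i)"
proof
  fix z assume z: "z \<in> halfspace d"
  then have "hsum d z \<in> hsum d ` W"
    using bij by (simp add: bij_betw_def halfspace_def)
  then obtain w where w: "w \<in> W" and hw: "hsum d w = hsum d z" by force
  define t where "t = (\<lambda>i. z i - w i)"
  show "\<exists>!p. fst p \<in> W \<and> snd p \<in> Lam d \<and> z = (\<lambda>i. fst p i + snd p i)"
  proof (rule ex1I[of _ "(w, t)"])
    have "t \<in> lattice_vecs d"
      using z w W by (auto simp: t_def halfspace_def lattice_vecs_def)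
    moreover have "hsum d t = 0"
      unfolding t_def hsum_diff using hw by simp
    ultimately show "fst (w, t) \<in> W \<and> snd (w, t) \<in> Lam d \<and> z = (\<lambda>i. fst (w, t) i + snd (w, t) i)"
      using w by (simp add: Lam_def t_def)
  next
    fix p assume p: "fst p \<in> W \<and> snd p \<in> Lam d \<and> z = (\<lambda>i. fst p i + snd p i)"
    then have "hsum d (fst p) = hsum d z"
      using hsum_add[of d "fst p" "snd p"] by (simp add: Lam_def)
    then have "fst p = w"
      using bij p w hw by (metis bij_betw_def inj_onD)
    moreover from this have "snd p = t"
      using p by (auto simp: t_def)
    ultimately show "p = (w, t)" by (simp add: prod_eq_iff)
  qed
qed

lemma card_prefix_Suc:
  "card {k. k < Suc n \<and> u k = i} = card {k. k < n \<and> u k = i} + (if u n = i then 1 else 0)"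
proof -
  have "{k. k < Suc n \<and> u k = i} =
      (if u n = i then insert n {k. k < n \<and> u k = i} else {k. k < n \<and> u k = i})"
    by (auto simp: less_Suc_eq)
  then show ?thesis by auto
qed

lemma hsum_ab_prefix:
  assumes "\<forall>k. u k \<le> d"
  shows "hsum d (ab_prefix d u n) = int n"
proof (induction n)
  case 0
  then show ?case by (simp add: hsum_def ab_prefix_def)
next
  case (Suc n)
  have "hsum d (ab_prefix d u (Suc n)) =
      (\<Sum>i\<le>d. int (card {k. k < n \<and> u k = i}) + (if u n = i then 1 else 0))"
    unfolding hsum_def ab_prefix_def by (rule sum.cong) (auto simp: card_prefix_Suc)
  also have "\<dots> = hsum d (ab_prefix d u n) + (\<Sum>i\<le>d. if u n = i then 1 else 0)"
    unfolding hsum_def ab_prefix_def by (simp add: sum.distrib)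
  also have "(\<Sum>i\<le>d. if u n = i then 1 else 0 :: int) = 1"
    using assms by (simp add: sum.delta)
  finally show ?case using Suc by simp
qed

lemma worm_subset_lattice_vecs: "worm d u \<subseteq> lattice_vecs d"
  by (auto simp: worm_def ab_prefix_def lattice_vecs_def)

lemma bij_betw_hsum_worm:
  assumes "\<forall>k. u k \<le> d"
  shows "bij_betw (hsum d) (worm d u) {0..}"
proof -
  have worm: "worm d u = range (ab_prefix d u)"
    by (auto simp: worm_def)
  have "inj_on (hsum d) (worm d u)"
    unfolding worm by (rule inj_onI) (auto simp: hsum_ab_prefix[OF assms])
  moreover have "hsum d ` worm d u = {0..}"
    unfolding worm image_image hsum_ab_prefix[OF assms] by (auto elim!: nonneg_int_cases)
  ultimately show ?thesis by (simp add: bij_betw_def)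
qed

theorem lemma3p14:
  fixes d :: nat and u :: "nat \<Rightarrow> nat"
  assumes "\<forall>k. u k \<le> d"
  shows "\<forall>z \<in> halfspace d. \<exists>!p. fst p \<in> worm d u \<and> snd p \<in> Lam d \<and> z = (\<lambda>i. fst p i + snd p i)"
  using worm_subset_lattice_vecs bij_betw_hsum_worm[OF assms] by (rule halfspace_tiling)

end
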